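(* Let $d\in\{1,2,3\}$ and let $K\subset M^{m\times n}$ be a $d$-dimensional linear subspace without Rank-$1$ connections. Let $M_1,\dots,M_{q_0}$ be all the $2\times2$ minors of $m\times n$ matrices. Then there exists $\beta\in\mathbb{R}^{q_0}\setminus\{0\}$ such that $\sum_{k=1}^{q_0}\beta_kM_k(X)\ge0$ for all $X\in K$ and $\sum_{k=1}^{q_0}\beta_kM_k\not\equiv0$ on $K$.
   Context: A set has Rank-$1$ connections if it contains $A\ne B$ with $\mathrm{Rank}(A-B)=1$. *)

theory Defs
  imports "HOL-Analysis.Analysis"
begin

definition has_rank1_connections :: "(real^'n^'m) set \<Rightarrow> bool" where
  "has_rank1_connections S \<longleftrightarrow> (\<exists>A\<in>S. \<exists>B\<in>S. A \<noteq> B \<and> rank (A - B) = 1)"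

definition minor_indices :: "(('m::{finite,linorder}) \<times> 'm \<times> ('n::{finite,linorder}) \<times> 'n) set" where
  "minor_indices = {(i, j, k, l). i < j \<and> k < l}"

definition minor2 :: "'m \<times> 'm \<times> 'n \<times> 'n \<Rightarrow> real^'n^'m \<Rightarrow> real" where
  "minor2 idx X = (case idx of (i, j, k, l) \<Rightarrow> X$i$k * X$j$l - X$i$l * X$j$k)"

end

theory Submission
  imports Defs
begin

text \<open>If no such \<open>\<beta>\<close> exists, convex separation fails: \<open>0\<close> lies in the convex hull of the
  vectors of \<open>2\<times>2\<close> minors of the unit matrices of \<open>K\<close>. By Caratheodory this gives finitely
  many \<open>Y\<^sub>t \<in> K\<close>, not all zero, whose minors sum to zero. Polarising, the vectors
  \<open>\<phi>(x,b) = (x\<^sup>T Y\<^sub>t b)\<^sub>t\<close> satisfy \<open>\<phi>(x,a) \<bullet> \<phi>(y,b) = \<phi>(x,b) \<bullet> \<phi>(y,a)\<close>. For a vector \<open>a\<close>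
  maximising \<open>dim {X a | X \<in> span Y}\<close>, a perturbation argument then puts every column of every
  matrix of \<open>span Y\<close> into that space. If \<open>X \<mapsto> X a\<close> is injective on \<open>span Y\<close>, the maps
  \<open>\<phi>(x,a) \<mapsto> \<phi>(x,b)\<close> are commuting symmetric operators, and a common eigenvector gives a
  rank-one matrix. Otherwise, as \<open>dim (span Y) \<le> 3\<close>, the columns and (by transposition) the
  rows of \<open>span Y\<close> lie in planes, and a three-dimensional space of \<open>2\<times>2\<close> matrices always
  contains a nonzero singular one. Either way \<open>K\<close> has a rank-one connection.\<close>

section \<open>Linear algebra\<close>

lemma dim_image_less_iff:
  fixes f :: "'a::euclidean_space \<Rightarrow> 'b::euclidean_space"
  assumes f: "linear f" and S: "subspace S"
  shows "dim (f ` S) < dim S \<longleftrightarrow> (\<exists>x\<in>S. x \<noteq> 0 \<and> f x = 0)"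
proof
  assume lt: "dim (f ` S) < dim S"
  show "\<exists>x\<in>S. x \<noteq> 0 \<and> f x = 0"
  proof (rule ccontr)
    assume "\<not> (\<exists>x\<in>S. x \<noteq> 0 \<and> f x = 0)"
    then have "inj_on f (span S)"
      unfolding span_eq_iff[THEN iffD2, OF S] linear_inj_on_iff_eq_0[OF f S] by blast
    then show False using dim_image_eq[OF f] lt by simp
  qed
next
  assume "\<exists>x\<in>S. x \<noteq> 0 \<and> f x = 0"
  then obtain x where x: "x \<in> S" "x \<noteq> 0" "f x = 0" by blast
  obtain B where B: "x \<in> B" "B \<subseteq> S" "independent B" "S \<subseteq> span B"
    using maximal_independent_subset_extend[of "{x}" S] x by auto
  have fin: "finite B" using independent_bound[OF B(3)] by blast
  have "f ` S \<subseteq> span (f ` B)"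
    using B(4) linear_span_image[OF f] by blast
  also have "\<dots> \<subseteq> span (insert 0 (f ` (B - {x})))"
    using x(3) by (intro span_mono) auto
  also have "\<dots> = span (f ` (B - {x}))" by simp
  finally have "dim (f ` S) \<le> card (f ` (B - {x}))"
    using fin by (intro dim_le_card) auto
  also have "\<dots> \<le> card (B - {x})" using fin by (rule card_image_le[OF finite_Diff])
  also have "\<dots> < card B" using fin B(1) by (rule card_Diff1_less)
  also have "\<dots> = dim S" using basis_card_eq_dim[OF B(2,4,3)] .
  finally show "dim (f ` S) < dim S" .
qed

lemma nonneg_eq_0_if_le_quadratic:
  fixes a C :: real
  assumes "a \<ge> 0" and "\<And>t. 2 * t * a \<le> t\<^sup>2 * C"
  shows "a = 0"
proof (rule ccontr)
  assume "a \<noteq> 0"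
  with assms(1) have pos: "a > 0" by simp
  show False
  proof (cases "C \<le> 0")
    case True then show False using assms(2)[of 1] pos by simp
  next
    case False
    then have "2 * a\<^sup>2 / C \<le> a\<^sup>2 / C"
      using assms(2)[of "a / C"] by (simp add: power2_eq_square field_simps)
    then show False using False pos by (simp add: divide_le_cancel)
  qed
qed

lemma rayleigh_maximizer_is_eigenvector:
  fixes T :: "'a::real_inner \<Rightarrow> 'a"
  assumes U: "subspace U" and T: "linear T" "\<And>u. u \<in> U \<Longrightarrow> T u \<in> U"
    and sym: "\<And>u w. u \<in> U \<Longrightarrow> w \<in> U \<Longrightarrow> T u \<bullet> w = u \<bullet> T w"
    and v: "v \<in> U" "norm v = 1"
    and max: "\<And>u. u \<in> U \<Longrightarrow> norm u = 1 \<Longrightarrow> T u \<bullet> u \<le> T v \<bullet> v"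
  shows "T v = (T v \<bullet> v) *\<^sub>R v"
proof -
  define \<rho> where "\<rho> = T v \<bullet> v"
  have hom: "T u \<bullet> u \<le> \<rho> * (u \<bullet> u)" if "u \<in> U" for u
  proof (cases "u = 0")
    case False
    have "T (u /\<^sub>R norm u) \<bullet> (u /\<^sub>R norm u) \<le> \<rho>"
      using max[of "u /\<^sub>R norm u"] that False U unfolding \<rho>_def by (simp add: subspace_scale)
    then show ?thesis
      using False by (simp add: linear_cmul[OF T(1)] field_simps power2_norm_eq_inner[symmetric] power2_eq_square)
  qed (simp add: linear_0[OF T(1)])
  have vv: "v \<bullet> v = 1" using v(2) by (simp add: dot_square_norm)
  define w where "w = T v - \<rho> *\<^sub>R v"
  have wU: "w \<in> U" unfolding w_def using v(1) T(2) U by (simp add: subspace_diff subspace_scale)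
  have wv: "w \<bullet> v = 0" unfolding w_def \<rho>_def using vv by (simp add: inner_diff_left)
  define C where "C = \<rho> * (w \<bullet> w) - T w \<bullet> w"
  \<comment> \<open>second variation of the Rayleigh quotient in the direction \<open>w\<close>\<close>
  have var: "2 * t * (w \<bullet> w) \<le> t\<^sup>2 * C" for t
  proof -
    let ?y = "v + t *\<^sub>R w"
    have le: "T ?y \<bullet> ?y \<le> \<rho> * (?y \<bullet> ?y)"
      using hom v(1) wU U by (simp add: subspace_add subspace_scale)
    have norm_y: "?y \<bullet> ?y = 1 + t\<^sup>2 * (w \<bullet> w)"
      using vv wv by (simp add: inner_add_left inner_add_right inner_commute power2_eq_square)
    have "T v \<bullet> w = w \<bullet> w"
      unfolding w_def by (simp add: inner_diff_left inner_diff_right inner_commute \<rho>_def vv)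
    then have form_y: "T ?y \<bullet> ?y = \<rho> + 2 * t * (w \<bullet> w) + t\<^sup>2 * (T w \<bullet> w)"
      using sym[OF wU v(1)] linear_add[OF T(1)] linear_cmul[OF T(1)] inner_commute[of w "T v"]
      unfolding \<rho>_def by (simp add: inner_add_left inner_add_right power2_eq_square algebra_simps)
    from le have "\<rho> + 2 * t * (w \<bullet> w) + t\<^sup>2 * (T w \<bullet> w) \<le> \<rho> * (1 + t\<^sup>2 * (w \<bullet> w))"
      unfolding norm_y form_y .
    then show ?thesis unfolding C_def by (simp add: algebra_simps)
  qed
  have "w \<bullet> w = 0" using nonneg_eq_0_if_le_quadratic[OF inner_ge_zero var] .
  then show ?thesis unfolding w_def \<rho>_def by simp
qed

lemma symmetric_operator_has_eigenvector:
  fixes T :: "'a::euclidean_space \<Rightarrow> 'a"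
  assumes U: "subspace U" "U \<noteq> {0}" and T: "linear T" "\<And>u. u \<in> U \<Longrightarrow> T u \<in> U"
    and sym: "\<And>u w. u \<in> U \<Longrightarrow> w \<in> U \<Longrightarrow> T u \<bullet> w = u \<bullet> T w"
  shows "\<exists>\<mu> u. u \<in> U \<and> u \<noteq> 0 \<and> T u = \<mu> *\<^sub>R u"
proof -
  let ?S = "U \<inter> sphere 0 1"
  obtain u where "u \<in> U" "u \<noteq> 0" using U subspace_0 by blast
  then have "u /\<^sub>R norm u \<in> ?S" using U(1) by (simp add: subspace_scale)
  then have ne: "?S \<noteq> {}" by blast
  have cpt: "compact ?S" using U(1) by (simp add: closed_subspace closed_Int_compact Int_commute)
  have "bounded_linear T" using T(1) by (simp add: linear_conv_bounded_linear)
  then have "continuous_on ?S (\<lambda>u. T u \<bullet> u)"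
    by (intro continuous_intros linear_continuous_on)
  then obtain v where v: "v \<in> ?S" and "\<And>u. u \<in> ?S \<Longrightarrow> T u \<bullet> u \<le> T v \<bullet> v"
    using continuous_attains_sup[OF cpt ne] by blast
  then have "T v = (T v \<bullet> v) *\<^sub>R v"
    using rayleigh_maximizer_is_eigenvector[OF U(1) T sym] by auto
  then show ?thesis using v by (intro exI[of _ "T v \<bullet> v"] exI[of _ v]) auto
qed

lemma commuting_symmetric_operators_common_eigenvector:
  fixes \<T> :: "('a::euclidean_space \<Rightarrow> 'a) set" and U :: "'a set"
  assumes "finite \<T>" "subspace U" "U \<noteq> {0}"
    and "\<forall>T\<in>\<T>. linear T \<and> (\<forall>u\<in>U. T u \<in> U) \<and> (\<forall>u\<in>U. \<forall>w\<in>U. T u \<bullet> w = u \<bullet> T w)"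
    and "\<forall>T\<in>\<T>. \<forall>T'\<in>\<T>. \<forall>u\<in>U. T (T' u) = T' (T u)"
  shows "\<exists>u\<in>U. u \<noteq> 0 \<and> (\<forall>T\<in>\<T>. \<exists>\<mu>. T u = \<mu> *\<^sub>R u)"
  using assms
proof (induction \<T> arbitrary: U rule: finite_induct)
  case empty
  then show ?case using subspace_0[of U] by auto
next
  case (insert T \<T>)
  have T: "linear T" "\<And>u. u \<in> U \<Longrightarrow> T u \<in> U" "\<And>u w. u \<in> U \<Longrightarrow> w \<in> U \<Longrightarrow> T u \<bullet> w = u \<bullet> T w"
    using insert.prems(3) by auto
  obtain \<mu> u0 where u0: "u0 \<in> U" "u0 \<noteq> 0" "T u0 = \<mu> *\<^sub>R u0"
    using symmetric_operator_has_eigenvector[OF insert.prems(1,2) T] by blast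
  define E where "E = {u\<in>U. T u = \<mu> *\<^sub>R u}"
  have E: "subspace E" "E \<noteq> {0}" "E \<subseteq> U"
    using insert.prems(1) u0 linear_add[OF T(1)] linear_cmul[OF T(1)]
    by (auto simp: E_def subspace_def linear_0[OF T(1)] scaleR_add_right)
  have invariant: "T' u \<in> E" if "T' \<in> \<T>" "u \<in> E" for T' u
  proof -
    have "u \<in> U" "T u = \<mu> *\<^sub>R u" using that(2) unfolding E_def by auto
    moreover have "linear T'" "T' u \<in> U" using insert.prems(3) that(1) \<open>u \<in> U\<close> by auto
    moreover have "T (T' u) = T' (T u)" using insert.prems(4) that(1) \<open>u \<in> U\<close> by auto
    ultimately show ?thesis unfolding E_def using linear_cmul by fastforce
  qed
  have "\<exists>u\<in>E. u \<noteq> 0 \<and> (\<forall>T\<in>\<T>. \<exists>\<mu>. T u = \<mu> *\<^sub>R u)"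
  proof (rule insert.IH[OF E(1,2)])
    show "\<forall>T\<in>\<T>. linear T \<and> (\<forall>u\<in>E. T u \<in> E) \<and> (\<forall>u\<in>E. \<forall>w\<in>E. T u \<bullet> w = u \<bullet> T w)"
      using insert.prems(3) invariant E(3) by blast
    show "\<forall>T\<in>\<T>. \<forall>T'\<in>\<T>. \<forall>u\<in>E. T (T' u) = T' (T u)"
      using insert.prems(4) E(3) by blast
  qed
  then show ?case using E(3) unfolding E_def by auto
qed

lemma orthonormal_basis_of_plane:
  fixes W :: "'a::euclidean_space set"
  assumes W: "subspace W" "dim W = 2"
  obtains e1 e2 where "e1 \<bullet> e1 = 1" "e2 \<bullet> e2 = 1" "e1 \<bullet> e2 = 0"
    "\<And>u. u \<in> W \<Longrightarrow> u = (e1 \<bullet> u) *\<^sub>R e1 + (e2 \<bullet> u) *\<^sub>R e2"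
proof -
  obtain B where B: "B \<subseteq> W" "pairwise orthogonal B" "\<And>x. x \<in> B \<Longrightarrow> norm x = 1"
    "card B = dim W" "span B = W"
    using orthonormal_basis_subspace[OF W(1)] by metis
  obtain e1 e2 where e: "B = {e1, e2}" "e1 \<noteq> e2" using B(4) W(2) card_2_iff by metis
  have n: "e1 \<bullet> e1 = 1" "e2 \<bullet> e2 = 1" using B(3) e(1) by (simp_all add: dot_square_norm)
  have o: "e1 \<bullet> e2 = 0" using B(2) e unfolding pairwise_def orthogonal_def by auto
  have "u = (e1 \<bullet> u) *\<^sub>R e1 + (e2 \<bullet> u) *\<^sub>R e2" if "u \<in> W" for u
  proof -
    define r where "r = u - (e1 \<bullet> u) *\<^sub>R e1 - (e2 \<bullet> u) *\<^sub>R e2"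
    have "r \<in> span B" unfolding r_def using that B(5) e(1)
      by (intro span_diff span_scale) (auto intro: span_base)
    moreover have "orthogonal r y" if "y \<in> B" for y
      using that e(1) n o unfolding r_def orthogonal_def
      by (auto simp: inner_diff_left inner_diff_right inner_commute[of e2 e1] inner_commute[of u])
    ultimately have "orthogonal r r" using orthogonal_to_span by blast
    then have "r = 0" by (simp add: orthogonal_def)
    then show ?thesis unfolding r_def by (simp add: algebra_simps)
  qed
  then show ?thesis using that n o by blast
qed

lemma common_line_if_det_eq_0:
  fixes e1 e2 :: "'a::real_vector"
  assumes "a * d = b * c"
  shows "\<exists>w. a *\<^sub>R e1 + c *\<^sub>R e2 \<in> span {w} \<and> b *\<^sub>R e1 + d *\<^sub>R e2 \<in> span {w}"
proof (cases "a = 0 \<and> c = 0")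
  case True
  then show ?thesis by (intro exI[of _ "b *\<^sub>R e1 + d *\<^sub>R e2"]) (simp add: span_base span_0)
next
  case False
  have "b *\<^sub>R e1 + d *\<^sub>R e2 = (if a = 0 then d / c else b / a) *\<^sub>R (a *\<^sub>R e1 + c *\<^sub>R e2)"
    using False assms by (auto simp: scaleR_add_right field_simps)
  then show ?thesis by (metis span_base span_scale singletonI)
qed

lemma isotropic_vector_if_indefinite:
  fixes q :: "'a::real_normed_vector \<Rightarrow> real"
  assumes S: "subspace S" and cont: "continuous_on S q"
    and hom: "\<And>c X. q (c *\<^sub>R X) = c\<^sup>2 * q X"
    and X1: "X1 \<in> S" "q X1 > 0" and X2: "X2 \<in> S" "q X2 < 0"
  shows "\<exists>Z\<in>S. Z \<noteq> 0 \<and> q Z = 0"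
proof -
  define P where "P = (\<lambda>s::real. X2 + s *\<^sub>R (X1 - X2))"
  have PS: "P s \<in> S" for s
    unfolding P_def using S X1(1) X2(1) by (simp add: subspace_add subspace_scale subspace_diff)
  have "continuous_on {0..1} P" unfolding P_def by (intro continuous_intros)
  then have "continuous_on {0..1} (q \<circ> P)"
    using PS by (intro continuous_on_compose continuous_on_subset[OF cont]) auto
  moreover have "(q \<circ> P) 0 \<le> 0" "0 \<le> (q \<circ> P) 1" using X1 X2 unfolding P_def by auto
  ultimately obtain s where s: "0 \<le> s" "s \<le> 1" "q (P s) = 0"
    using IVT'[of "q \<circ> P" 0 0 1] by auto
  have "P s \<noteq> 0"
  proof
    assume "P s = 0"
    then have "(1 - s) *\<^sub>R X2 = (- s) *\<^sub>R X1" unfolding P_def by (simp add: algebra_simps)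
    then have "(1 - s)\<^sup>2 * q X2 = s\<^sup>2 * q X1" by (metis hom power2_minus)
    moreover have "(1 - s)\<^sup>2 * q X2 \<le> 0" "s\<^sup>2 * q X1 \<ge> 0" using X1 X2 by (simp_all add: mult_nonneg_nonpos)
    ultimately have "(1 - s)\<^sup>2 * q X2 = 0" "s\<^sup>2 * q X1 = 0" by linarith+
    then show False using X1 X2 by simp
  qed
  then show ?thesis using PS s(3) by blast
qed

lemma linear_matrix_vector_mult_left: "linear (\<lambda>X::real^'n^'m. X *v a)"
  by (intro linearI) (simp_all add: matrix_vector_mult_add_rdistrib scaleR_matrix_vector_assoc)

lemma matrix_eq_0_if_columns_eq_0:
  fixes X :: "real^'n^'m"
  assumes "\<And>b. X *v b = 0"
  shows "X = 0"
proof -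
  have "X $ i $ j = (X *v axis j 1) $ i" for i j
    by (simp add: matrix_vector_mult_basis column_def)
  then show ?thesis using assms by (simp add: vec_eq_iff)
qed

lemma rank_eq_1_if_columns_in_span_singleton:
  fixes Z :: "real^'n^'m"
  assumes "Z \<noteq> 0" "\<And>l. Z *v axis l 1 \<in> span {w}"
  shows "rank Z = 1"
proof -
  have "Z *v b \<in> span {w}" for b
  proof -
    have "Z *v b = (\<Sum>l\<in>UNIV. b$l *\<^sub>R (Z *v axis l 1))"
      unfolding matrix_vector_mult_basis by (simp add: matrix_mult_sum scalar_mult_eq_scaleR)
    also have "\<dots> \<in> span {w}" using assms(2) by (intro span_sum span_scale) auto
    finally show ?thesis .
  qed
  then have "rank Z \<le> dim (span {w})"
    unfolding rank_dim_range by (intro dim_subset) auto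
  moreover have "rank Z \<noteq> 0" using assms(1) rank_eq_0 by blast
  ultimately show ?thesis using dim_singleton[of w] by (simp split: if_splits)
qed

lemma has_rank1_connections_subspace_iff:
  assumes "subspace K"
  shows "has_rank1_connections K \<longleftrightarrow> (\<exists>Z\<in>K. rank Z = 1)"
proof
  assume "has_rank1_connections K"
  then show "\<exists>Z\<in>K. rank Z = 1"
    unfolding has_rank1_connections_def using assms by (auto intro: subspace_diff)
next
  assume "\<exists>Z\<in>K. rank Z = 1"
  then obtain Z where "Z \<in> K" "rank Z = 1" by blast
  moreover have "Z \<noteq> 0" using \<open>rank Z = 1\<close> by auto
  ultimately show "has_rank1_connections K"
    unfolding has_rank1_connections_def using subspace_0[OF assms] by force
qed

section \<open>Sums of minors of a finite family of matrices\<close>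

lemma minor2_scaleR: "minor2 idx (c *\<^sub>R X) = c\<^sup>2 * minor2 idx X"
  by (cases idx) (simp add: minor2_def power2_eq_square algebra_simps)

lemma minor2_zero [simp]: "minor2 idx 0 = 0"
  by (cases idx) (simp add: minor2_def)

definition minor_sums_vanish :: "('k::finite \<Rightarrow> real^('n::{finite,linorder})^('m::{finite,linorder})) \<Rightarrow> bool" where
  "minor_sums_vanish Y \<longleftrightarrow> (\<forall>idx\<in>minor_indices. (\<Sum>t\<in>UNIV. minor2 idx (Y t)) = 0)"

lemma minor_sums_vanish_all_indices:
  assumes "minor_sums_vanish Y"
  shows "(\<Sum>t\<in>UNIV. minor2 (i, j, k, l) (Y t)) = 0"
proof -
  let ?s = "\<lambda>i j k l. \<Sum>t\<in>UNIV. minor2 (i, j, k, l) (Y t)"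
  have swap_rows: "?s i j k l = - ?s j i k l" and swap_cols: "?s i j k l = - ?s i j l k"
    for i j k l by (simp_all add: minor2_def sum_negf[symmetric] algebra_simps)
  have diag: "?s i i k l = 0" "?s i j k k = 0" for i j k l by (simp_all add: minor2_def)
  have ordered: "?s i j k l = 0" if "i < j" "k < l" for i j k l
    using assms that unfolding minor_sums_vanish_def minor_indices_def by blast
  show ?thesis
  proof (cases i j rule: linorder_cases)
    case less
    then show ?thesis
      using ordered[of i j k l] ordered[of i j l k] swap_cols[of i j k l] diag
      by (cases k l rule: linorder_cases) auto
  next
    case greater
    then show ?thesis
      using ordered[of j i k l] ordered[of j i l k] swap_rows[of i j k l] swap_cols[of j i k l] diag
      by (cases k l rule: linorder_cases) auto
  qed (simp add: diag)
qed

lemma bilinear_form_minor_expansion: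
  fixes A :: "real^'n^'m"
  shows "(x \<bullet> (A *v a)) * (y \<bullet> (A *v b)) - (x \<bullet> (A *v b)) * (y \<bullet> (A *v a)) =
    (\<Sum>i\<in>UNIV. \<Sum>j\<in>UNIV. \<Sum>k\<in>UNIV. \<Sum>l\<in>UNIV. x$i * y$j * a$k * b$l * minor2 (i, j, k, l) A)"
proof -
  have form: "x \<bullet> (A *v a) = (\<Sum>i\<in>UNIV. \<Sum>k\<in>UNIV. x$i * A$i$k * a$k)" for x a
    by (simp add: inner_vec_def matrix_vector_mult_def sum_distrib_left mult.assoc)
  have "(x \<bullet> (A *v a)) * (y \<bullet> (A *v b)) =
    (\<Sum>i\<in>UNIV. \<Sum>j\<in>UNIV. \<Sum>k\<in>UNIV. \<Sum>l\<in>UNIV. x$i * y$j * a$k * b$l * (A$i$k * A$j$l))"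
    unfolding form by (simp add: sum_product mult.commute mult.left_commute mult.assoc)
  moreover have "(x \<bullet> (A *v b)) * (y \<bullet> (A *v a)) =
    (\<Sum>i\<in>UNIV. \<Sum>j\<in>UNIV. \<Sum>l\<in>UNIV. \<Sum>k\<in>UNIV. x$i * y$j * a$k * b$l * (A$i$l * A$j$k))"
    unfolding form by (simp add: sum_product mult.commute mult.left_commute mult.assoc)
  moreover have "\<dots> = (\<Sum>i\<in>UNIV. \<Sum>j\<in>UNIV. \<Sum>k\<in>UNIV. \<Sum>l\<in>UNIV. x$i * y$j * a$k * b$l * (A$i$l * A$j$k))"
    by (rule sum.cong[OF refl], rule sum.cong[OF refl], rule sum.swap)
  ultimately show ?thesis
    by (simp add: minor2_def right_diff_distrib sum_subtractf)
qed

text \<open>The polarisation of the minor sums: by \<open>bilinear_form_minor_expansion\<close>, the minors of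
  the family sum to zero exactly when \<open>family_form\<close> has the exchange symmetry below.\<close>
definition family_form :: "('k::finite \<Rightarrow> real^'n^'m) \<Rightarrow> real^'m \<Rightarrow> real^'n \<Rightarrow> real^'k" where
  "family_form Y x b = (\<chi> t. x \<bullet> (Y t *v b))"

definition exchange_symmetric :: "('k::finite \<Rightarrow> real^'n^'m) \<Rightarrow> bool" where
  "exchange_symmetric Y \<longleftrightarrow>
    (\<forall>x a y b. family_form Y x a \<bullet> family_form Y y b = family_form Y x b \<bullet> family_form Y y a)"

lemma exchange_symmetric_if_minor_sums_vanish:
  fixes Y :: "'k::finite \<Rightarrow> real^('n::{finite,linorder})^('m::{finite,linorder})"
  assumes "minor_sums_vanish Y"
  shows "exchange_symmetric Y"
  unfolding exchange_symmetric_def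
proof (intro allI)
  fix x a y b
  have "family_form Y x a \<bullet> family_form Y y b - family_form Y x b \<bullet> family_form Y y a
    = (\<Sum>t\<in>UNIV. (x \<bullet> (Y t *v a)) * (y \<bullet> (Y t *v b)) - (x \<bullet> (Y t *v b)) * (y \<bullet> (Y t *v a)))"
    by (simp add: family_form_def inner_vec_def sum_subtractf)
  also have "\<dots> = (\<Sum>t\<in>UNIV. \<Sum>i\<in>UNIV. \<Sum>j\<in>UNIV. \<Sum>k\<in>UNIV. \<Sum>l\<in>UNIV.
      x$i * y$j * a$k * b$l * minor2 (i, j, k, l) (Y t))"
    by (intro sum.cong refl bilinear_form_minor_expansion)
  also have "\<dots> = (\<Sum>i\<in>UNIV. \<Sum>j\<in>UNIV. \<Sum>k\<in>UNIV. \<Sum>l\<in>UNIV.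
      x$i * y$j * a$k * b$l * (\<Sum>t\<in>UNIV. minor2 (i, j, k, l) (Y t)))"
    unfolding sum_distrib_left
    by (subst sum.swap, subst (2) sum.swap, subst (3) sum.swap, subst (4) sum.swap) (rule refl)
  also have "\<dots> = 0" using minor_sums_vanish_all_indices[OF assms] by simp
  finally show "family_form Y x a \<bullet> family_form Y y b = family_form Y x b \<bullet> family_form Y y a"
    by simp
qed

definition family_comb :: "('k::finite \<Rightarrow> real^'n^'m) \<Rightarrow> real^'k \<Rightarrow> real^'n^'m" where
  "family_comb Y c = (\<Sum>t\<in>UNIV. c$t *\<^sub>R Y t)"

lemma inner_family_form: "c \<bullet> family_form Y x b = x \<bullet> (family_comb Y c *v b)"
proof -
  have "family_comb Y c *v b = (\<Sum>t\<in>UNIV. c$t *\<^sub>R (Y t *v b))"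
    using linear_sum[OF linear_matrix_vector_mult_left[of b], of "\<lambda>t. c$t *\<^sub>R Y t" UNIV]
    by (simp add: family_comb_def o_def scaleR_matrix_vector_assoc[symmetric])
  moreover have "c \<bullet> family_form Y x b = (\<Sum>t\<in>UNIV. c$t * (x \<bullet> (Y t *v b)))"
    by (simp add: family_form_def inner_vec_def)
  ultimately show ?thesis by (simp add: inner_sum_right)
qed

lemma family_comb_in_span: "family_comb Y c \<in> span (range Y)"
  unfolding family_comb_def by (intro span_sum span_scale span_base) auto

lemma linear_family_form: "linear (\<lambda>x. family_form Y x b)"
  by (intro linearI) (simp_all add: family_form_def vec_eq_iff inner_add_left)

lemma family_form_diff: "family_form Y (x - y) b = family_form Y x b - family_form Y y b"
  by (simp add: family_form_def vec_eq_iff inner_diff_left)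

lemma subspace_injective_onto_image:
  fixes A :: "'a::euclidean_space \<Rightarrow> 'b::euclidean_space"
  assumes A: "linear A" and S: "subspace S"
  obtains D where "subspace D" "D \<subseteq> S" "A ` D = A ` S" "inj_on A D"
proof -
  obtain g where g: "g ` UNIV \<subseteq> S" "linear g" "\<And>v. v \<in> A ` S \<Longrightarrow> A (g v) = v"
    using linear_exists_right_inverse_on[OF A S] by blast
  have "subspace (g ` A ` S)" by (intro linear_subspace_image g(2) A S)
  moreover have "g ` A ` S \<subseteq> S" using g(1) by blast
  moreover have "A ` g ` A ` S = A ` S"
    unfolding image_image by (rule image_cong[OF refl]) (simp add: g(3))
  moreover have "inj_on A (g ` A ` S)" unfolding inj_on_def using g(3) by auto
  ultimately show ?thesis by (rule that)
qed

text \<open>The kernel of \<open>A + t B\<close> on \<open>span (insert X D)\<close> can only contain \<open>d + s X\<close> with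
  \<open>s = - x \<bullet> B d / x \<bullet> B X\<close> (pair with \<open>x\<close>); then \<open>A d\<close> is \<open>t\<close> times a bounded
  linear image of \<open>d\<close>, which for small \<open>t\<close> contradicts the injectivity of \<open>A\<close> on \<open>D\<close>.\<close>
lemma injective_perturbation_on_extension:
  fixes A B :: "'a::euclidean_space \<Rightarrow> 'b::euclidean_space"
  assumes lin: "linear A" "linear B" and D: "subspace D" "inj_on A D"
    and X: "A X = 0" and x: "\<forall>d\<in>D. x \<bullet> A d = 0" "x \<bullet> B X \<noteq> 0"
  shows "\<exists>t. inj_on (\<lambda>w. A w + t *\<^sub>R B w) (span (insert X D))"
proof -
  have "\<exists>e>0. \<forall>d\<in>D. e * norm d \<le> norm (A d)"
    using lin(1) D(2) unfolding linear_inj_on_iff_eq_0[OF lin(1) D(1)]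
    by (intro injective_imp_isometric[OF closed_subspace[OF D(1)] D(1)])
      (simp_all add: linear_conv_bounded_linear)
  then obtain e where e: "e > 0" "\<And>d. d \<in> D \<Longrightarrow> e * norm d \<le> norm (A d)" by blast
  define \<gamma> where "\<gamma> = x \<bullet> B X"
  define B' where "B' = (\<lambda>d. B d - ((x \<bullet> B d) / \<gamma>) *\<^sub>R B X)"
  have "linear B'"
    unfolding B'_def using lin(2)
    by (intro linearI) (simp_all add: linear_add linear_cmul inner_add_right add_divide_distrib
        scaleR_add_left scaleR_diff_right)
  then obtain C where C: "C > 0" "\<And>d. norm (B' d) \<le> norm d * C"
    using bounded_linear.pos_bounded by (auto simp: linear_conv_bounded_linear)
  define t where "t = e / (2 * C)"
  have t: "t > 0" unfolding t_def using e C by simp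
  have "linear (\<lambda>w. A w + t *\<^sub>R B w)" using lin by (intro linear_compose_add linear_compose_scale_right)
  moreover have "w = 0" if w: "w \<in> span (insert X D)" "A w + t *\<^sub>R B w = 0" for w
  proof -
    obtain s where "w - s *\<^sub>R X \<in> span D" using w(1) unfolding span_insert by blast
    then have d: "w - s *\<^sub>R X \<in> D" by (simp add: span_eq_iff[THEN iffD2, OF D(1)])
    define d where "d = w - s *\<^sub>R X"
    have eq: "A d + t *\<^sub>R B d + (s * t) *\<^sub>R B X = 0"
      using w(2) X unfolding d_def
      by (simp add: linear_diff[OF lin(1)] linear_diff[OF lin(2)] linear_cmul[OF lin(1)]
          linear_cmul[OF lin(2)] algebra_simps)
    have "t * (x \<bullet> B d + s * \<gamma>) = x \<bullet> (A d + t *\<^sub>R B d + (s * t) *\<^sub>R B X)"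
      using x(1) d unfolding d_def \<gamma>_def by (simp add: inner_add_right algebra_simps)
    then have "x \<bullet> B d + s * \<gamma> = 0" using eq t by simp
    then have "s = - (x \<bullet> B d) / \<gamma>" using x(2) unfolding \<gamma>_def by (simp add: field_simps)
    then have "A d = - (t *\<^sub>R B' d)"
      using eq unfolding B'_def by (simp add: algebra_simps)
    then have "e * norm d \<le> t * (norm d * C)"
      using e(2)[of d] d C(2)[of d] t unfolding d_def by (simp add: mult_left_mono order_trans)
    also have "\<dots> = e / 2 * norm d" unfolding t_def using C by simp
    finally have "d = 0" using e(1) by (simp add: mult_le_0_iff)
    then show "w = 0" using \<open>s = - (x \<bullet> B d) / \<gamma>\<close> linear_0[OF lin(2)] unfolding d_def by simp
  qed
  ultimately have "inj_on (\<lambda>w. A w + t *\<^sub>R B w) (span (insert X D))"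
    by (simp add: linear_inj_on_iff_eq_0)
  then show ?thesis ..
qed

lemma dim_image_increases_under_perturbation:
  fixes A B :: "'a::euclidean_space \<Rightarrow> 'b::euclidean_space"
  assumes lin: "linear A" "linear B" and S: "subspace S"
    and X: "X \<in> S" "A X = 0" and x: "\<forall>s\<in>S. x \<bullet> A s = 0" "x \<bullet> B X \<noteq> 0"
  shows "\<exists>t. dim (A ` S) < dim ((\<lambda>w. A w + t *\<^sub>R B w) ` S)"
proof -
  obtain D where D: "subspace D" "D \<subseteq> S" "A ` D = A ` S" "inj_on A D"
    using subspace_injective_onto_image[OF lin(1) S] .
  have dimD: "dim D = dim (A ` S)"
    using dim_image_eq[OF lin(1), of D] D by (metis span_eq_iff)
  obtain t where t: "inj_on (\<lambda>w. A w + t *\<^sub>R B w) (span (insert X D))"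
    using injective_perturbation_on_extension[OF lin D(1,4) X(2)] x D(2) by blast
  have "X \<notin> span D"
  proof
    assume "X \<in> span D"
    then have "X = 0" using D(1,4) X(2) linear_0[OF lin(1)] by (metis inj_onD span_eq_iff subspace_0)
    then show False using x(2) linear_0[OF lin(2)] by simp
  qed
  then have "dim (A ` S) < dim (span (insert X D))" using dimD by (simp add: dim_insert)
  also have "\<dots> = dim ((\<lambda>w. A w + t *\<^sub>R B w) ` span (insert X D))"
    using lin t by (intro dim_image_eq[symmetric] linear_compose_add linear_compose_scale_right)
      (simp_all only: span_span)
  also have "\<dots> \<le> dim ((\<lambda>w. A w + t *\<^sub>R B w) ` S)"
    using D(2) X(1) S by (intro dim_subset image_mono span_minimal) auto
  finally show ?thesis by blast
qed

section \<open>Rank-one matrices in the span of a family with vanishing minor sums\<close>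

definition evaluation_space :: "(real^'n^'m) set \<Rightarrow> real^'n \<Rightarrow> (real^'m) set" where
  "evaluation_space S a = (\<lambda>X. X *v a) ` S"

lemma subspace_evaluation_space: "subspace S \<Longrightarrow> subspace (evaluation_space S a)"
  unfolding evaluation_space_def by (rule linear_subspace_image[OF linear_matrix_vector_mult_left])

lemma annihilator_of_maximal_evaluation_space:
  fixes S :: "(real^'n^'m) set"
  assumes S: "subspace S" and max: "\<And>a'. dim (evaluation_space S a') \<le> dim (evaluation_space S a)"
    and X: "X \<in> S" "X *v a = 0" and x: "\<forall>w\<in>evaluation_space S a. x \<bullet> w = 0"
  shows "x \<bullet> (X *v b) = 0"
proof (rule ccontr)
  assume "x \<bullet> (X *v b) \<noteq> 0"
  then obtain t where "dim (evaluation_space S a) < dim ((\<lambda>Y. Y *v a + t *\<^sub>R (Y *v b)) ` S)"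
    using dim_image_increases_under_perturbation[OF linear_matrix_vector_mult_left
        linear_matrix_vector_mult_left S X] x
    unfolding evaluation_space_def by blast
  also have "(\<lambda>Y. Y *v a + t *\<^sub>R (Y *v b)) ` S = evaluation_space S (a + t *\<^sub>R b)"
    by (simp add: evaluation_space_def matrix_vector_right_distrib matrix_vector_mult_scaleR)
  finally show False using max[of "a + t *\<^sub>R b"] by simp
qed

lemma family_form_annihilator_of_maximal_evaluation_space:
  assumes Y: "exchange_symmetric Y"
    and max: "\<And>a'. dim (evaluation_space (span (range Y)) a') \<le> dim (evaluation_space (span (range Y)) a)"
    and x: "\<forall>w\<in>evaluation_space (span (range Y)) a. x \<bullet> w = 0"
  shows "family_form Y x b = 0"
proof -
  define v where "v = family_form Y x b"
  define Z where "Z = family_comb Y v"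
  have "family_form Y x a = 0"
    using x span_base[OF rangeI, of Y] by (simp add: family_form_def vec_eq_iff evaluation_space_def)
  moreover have "z \<bullet> (Z *v a) = family_form Y x a \<bullet> family_form Y z b" for z
    using Y[unfolded exchange_symmetric_def, rule_format, of x b z a]
    by (simp add: Z_def v_def inner_family_form[symmetric])
  ultimately have "z \<bullet> (Z *v a) = 0" for z by simp
  then have "Z *v a = 0" by (metis inner_eq_zero_iff)
  then have "x \<bullet> (Z *v b) = 0"
    using annihilator_of_maximal_evaluation_space[OF subspace_span max _ _ x] family_comb_in_span
    unfolding Z_def by blast
  then have "v \<bullet> v = 0" unfolding Z_def by (simp add: inner_family_form[symmetric] v_def)
  then show ?thesis unfolding v_def by simp
qed

lemma columns_in_maximal_evaluation_space:
  assumes Y: "exchange_symmetric Y"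
    and max: "\<And>a'. dim (evaluation_space (span (range Y)) a') \<le> dim (evaluation_space (span (range Y)) a)"
    and X: "X \<in> span (range Y)"
  shows "X *v b \<in> evaluation_space (span (range Y)) a"
proof -
  define W where "W = evaluation_space (span (range Y)) a"
  have W: "subspace W" unfolding W_def by (intro subspace_evaluation_space subspace_span)
  have "Y t *v b \<in> W" for t
  proof -
    obtain y z where yz: "y \<in> span W" "\<And>w. w \<in> span W \<Longrightarrow> orthogonal z w" "Y t *v b = y + z"
      using orthogonal_subspace_decomp_exists[of W "Y t *v b"] by blast
    have "\<forall>w\<in>W. z \<bullet> w = 0" using yz(2) span_base unfolding orthogonal_def by blast
    then have "family_form Y z b = 0"
      using family_form_annihilator_of_maximal_evaluation_space[OF Y max] unfolding W_def by blast
    then have "z \<bullet> (Y t *v b) = 0" by (simp add: family_form_def vec_eq_iff)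
    moreover have "z \<bullet> y = 0" using yz(1,2) unfolding orthogonal_def by blast
    ultimately have "z = 0" using yz(3) by (simp add: inner_add_right)
    then show ?thesis using yz(1,3) by (simp add: span_eq_iff[THEN iffD2, OF W])
  qed
  moreover have "subspace {X. X *v b \<in> W}"
    using W unfolding subspace_def
    by (auto simp: matrix_vector_mult_add_rdistrib scaleR_matrix_vector_assoc[symmetric])
  ultimately have "span (range Y) \<subseteq> {X. X *v b \<in> W}" by (intro span_minimal) auto
  then show ?thesis using X unfolding W_def by blast
qed

context
  fixes Y :: "'k::finite \<Rightarrow> real^'n^'m" and a :: "real^'n"
  assumes symmetric: "exchange_symmetric Y"
    and injective: "\<And>X. X \<in> span (range Y) \<Longrightarrow> X *v a = 0 \<Longrightarrow> X = 0"
begin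

lemma exchange_symmetric_eq:
  "family_form Y x a' \<bullet> family_form Y y b' = family_form Y x b' \<bullet> family_form Y y a'"
  using symmetric unfolding exchange_symmetric_def by blast

lemma family_form_in_range_at:
  "family_form Y x b \<in> range (\<lambda>x. family_form Y x a)"
proof -
  let ?U = "range (\<lambda>x. family_form Y x a)"
  have U: "subspace ?U" by (rule linear_subspace_image[OF linear_family_form subspace_UNIV])
  obtain v1 v2 where v: "v1 \<in> span ?U" "\<And>w. w \<in> span ?U \<Longrightarrow> orthogonal v2 w"
    "family_form Y x b = v1 + v2"
    using orthogonal_subspace_decomp_exists[of ?U "family_form Y x b"] by blast
  have "z \<bullet> (family_comb Y v2 *v a) = 0" for z
    using v(2)[of "family_form Y z a"] by (simp add: span_base orthogonal_def inner_family_form)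
  then have "family_comb Y v2 = 0"
    using injective family_comb_in_span by (metis inner_eq_zero_iff)
  then have "v2 \<bullet> (v1 + v2) = 0" using v(3) inner_family_form[of v2 Y x b] by simp
  moreover have "v2 \<bullet> v1 = 0" using v(1,2) by (simp add: orthogonal_def)
  ultimately have "v2 \<bullet> v2 = 0" by (simp add: inner_add_right)
  then show ?thesis using v(1,3) by (simp add: span_eq_iff[THEN iffD2, OF U])
qed

lemma family_form_eq_0_if_eq_0_at:
  assumes "family_form Y z a = 0"
  shows "family_form Y z b = 0"
proof -
  obtain y where y: "family_form Y z b = family_form Y y a"
    using family_form_in_range_at[of z b] by blast
  have "family_form Y z b \<bullet> family_form Y z b = family_form Y z a \<bullet> family_form Y y b"
    using exchange_symmetric_eq[of z b y a] y by simp
  then show ?thesis using assms by simp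
qed

lemma family_form_shifts_commute:
  assumes "family_form Y x b = family_form Y x1 a" "family_form Y x c = family_form Y x2 a"
  shows "family_form Y x1 c = family_form Y x2 b"
proof -
  let ?U = "range (\<lambda>x. family_form Y x a)"
  have "family_form Y x1 c \<bullet> w = family_form Y x2 b \<bullet> w" if w: "w \<in> ?U" for w
  proof -
    obtain y where y: "w = family_form Y y a" using w by blast
    have "family_form Y x1 c \<bullet> w = family_form Y x b \<bullet> family_form Y y c"
      using exchange_symmetric_eq[of x1 c y a] assms(1) y by simp
    also have "\<dots> = family_form Y x c \<bullet> family_form Y y b" by (rule exchange_symmetric_eq)
    also have "\<dots> = family_form Y x2 b \<bullet> w"
      using exchange_symmetric_eq[of x2 a y b] assms(2) y by simp
    finally show ?thesis .
  qed
  moreover have "family_form Y x1 c - family_form Y x2 b \<in> ?U"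
    using family_form_in_range_at
    by (intro subspace_diff linear_subspace_image[OF linear_family_form subspace_UNIV])
  ultimately have "(family_form Y x1 c - family_form Y x2 b) \<bullet> (family_form Y x1 c - family_form Y x2 b) = 0"
    by (simp add: inner_diff_left)
  then show ?thesis by simp
qed

lemma shift_operators:
  obtains T where "\<And>b x. T b (family_form Y x a) = family_form Y x b" "\<And>b. linear (T b)"
    "\<And>b u. T b u \<in> range (\<lambda>x. family_form Y x a)"
    "\<And>b u w. u \<in> range (\<lambda>x. family_form Y x a) \<Longrightarrow> w \<in> range (\<lambda>x. family_form Y x a) \<Longrightarrow>
      T b u \<bullet> w = u \<bullet> T b w"
    "\<And>b c u. u \<in> range (\<lambda>x. family_form Y x a) \<Longrightarrow> T c (T b u) = T b (T c u)"
proof -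
  obtain g where g: "linear g" "\<And>v. v \<in> range (\<lambda>x. family_form Y x a) \<Longrightarrow> family_form Y (g v) a = v"
    using linear_exists_right_inverse_on[OF linear_family_form[of Y a] subspace_UNIV] by auto
  define T where "T = (\<lambda>b v. family_form Y (g v) b)"
  have shift: "T b (family_form Y x a) = family_form Y x b" for b x
    using family_form_eq_0_if_eq_0_at[of "g (family_form Y x a) - x" b] g(2)[of "family_form Y x a"]
    unfolding T_def family_form_diff by simp
  have lin: "linear (T b)" for b
    unfolding T_def using linear_compose[OF g(1) linear_family_form[of Y b]] by (simp add: o_def)
  have range: "T b u \<in> range (\<lambda>x. family_form Y x a)" for b u
    unfolding T_def by (rule family_form_in_range_at)
  have sym: "T b u \<bullet> w = u \<bullet> T b w"
    if u: "u \<in> range (\<lambda>x. family_form Y x a)" and w: "w \<in> range (\<lambda>x. family_form Y x a)" for b u w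
  proof -
    have "T b u \<bullet> w = family_form Y (g u) b \<bullet> family_form Y (g w) a" unfolding T_def g(2)[OF w] ..
    also have "\<dots> = family_form Y (g u) a \<bullet> family_form Y (g w) b" by (rule exchange_symmetric_eq)
    finally show ?thesis unfolding T_def g(2)[OF u] .
  qed
  have comm: "T c (T b u) = T b (T c u)" if u: "u \<in> range (\<lambda>x. family_form Y x a)" for b c u
  proof -
    obtain x where x: "u = family_form Y x a" using u by blast
    obtain x1 where x1: "family_form Y x b = family_form Y x1 a" using family_form_in_range_at by blast
    obtain x2 where x2: "family_form Y x c = family_form Y x2 a" using family_form_in_range_at by blast
    show ?thesis unfolding x shift x1 x2 using family_form_shifts_commute[OF x1 x2] by simp
  qed
  show ?thesis using shift lin range sym comm by (rule that)
qed

lemma range_family_form_nonzero: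
  assumes "span (range Y) \<noteq> {0}"
  shows "range (\<lambda>x. family_form Y x a) \<noteq> {0}"
proof
  assume "range (\<lambda>x. family_form Y x a) = {0}"
  then have vanish: "family_form Y x b = 0" for x b using family_form_eq_0_if_eq_0_at by blast
  have "(Y t *v b) \<bullet> (Y t *v b) = 0" for t b
    using arg_cong[where f="\<lambda>v. v $ t", OF vanish[of "Y t *v b" b]] by (simp add: family_form_def)
  then have "Y t = 0" for t by (intro matrix_eq_0_if_columns_eq_0) simp
  then show False using assms span_base[of _ "range Y"] by auto
qed

lemma rank_one_in_span_if_injective_evaluation:
  assumes ne: "span (range Y) \<noteq> {0}"
  shows "\<exists>Z\<in>span (range Y). rank Z = 1"
proof -
  let ?U = "range (\<lambda>x. family_form Y x a)"
  obtain T where T: "\<And>b x. T b (family_form Y x a) = family_form Y x b" "\<And>b. linear (T b)"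
    "\<And>b u. T b u \<in> ?U" "\<And>b u w. u \<in> ?U \<Longrightarrow> w \<in> ?U \<Longrightarrow> T b u \<bullet> w = u \<bullet> T b w"
    "\<And>b c u. u \<in> ?U \<Longrightarrow> T c (T b u) = T b (T c u)"
    using shift_operators by blast
  have ne_U: "?U \<noteq> {0}" by (rule range_family_form_nonzero[OF ne])
  have "subspace ?U" by (rule linear_subspace_image[OF linear_family_form subspace_UNIV])
  moreover have "\<forall>S\<in>range (\<lambda>l. T (axis l 1)).
      linear S \<and> (\<forall>u\<in>?U. S u \<in> ?U) \<and> (\<forall>u\<in>?U. \<forall>w\<in>?U. S u \<bullet> w = u \<bullet> S w)"
    using T(2,3,4) by blast
  moreover have "\<forall>S\<in>range (\<lambda>l. T (axis l 1)). \<forall>S'\<in>range (\<lambda>l. T (axis l 1)). \<forall>u\<in>?U. S (S' u) = S' (S u)"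
    using T(5) by blast
  ultimately have "\<exists>u\<in>?U. u \<noteq> 0 \<and> (\<forall>S\<in>range (\<lambda>l. T (axis l 1)). \<exists>\<mu>. S u = \<mu> *\<^sub>R u)"
    using commuting_symmetric_operators_common_eigenvector[OF finite_imageI[OF finite] _ ne_U]
    by blast
  then obtain u where u: "u \<in> ?U" "u \<noteq> 0" "\<forall>l. \<exists>\<mu>. T (axis l 1) u = \<mu> *\<^sub>R u" by blast
  define Z where "Z = family_comb Y u"
  obtain x0 where x0: "u = family_form Y x0 a" using u(1) by blast
  have "Z *v a \<noteq> 0" using u(2) inner_family_form[of u Y x0 a] unfolding Z_def x0 by auto
  moreover have "Z *v axis l 1 \<in> span {Z *v a}" for l
  proof -
    obtain \<mu> where \<mu>: "T (axis l 1) u = \<mu> *\<^sub>R u" using u(3) by blast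
    have "x \<bullet> (Z *v axis l 1) = x \<bullet> (\<mu> *\<^sub>R (Z *v a))" for x
    proof -
      have "x \<bullet> (Z *v axis l 1) = u \<bullet> T (axis l 1) (family_form Y x a)"
        unfolding Z_def inner_family_form[symmetric] T(1) ..
      also have "\<dots> = T (axis l 1) u \<bullet> family_form Y x a" by (rule T(4)[OF u(1) rangeI, symmetric])
      also have "\<dots> = x \<bullet> (\<mu> *\<^sub>R (Z *v a))" unfolding \<mu> inner_scaleR_left by (simp add: inner_family_form Z_def)
      finally show ?thesis .
    qed
    then show ?thesis by (metis vector_eq_ldot span_base span_scale singletonI)
  qed
  ultimately have "rank Z = 1" by (intro rank_eq_1_if_columns_in_span_singleton) auto
  then show ?thesis using family_comb_in_span unfolding Z_def by blast
qed

end

lemma column_plane_if_no_rank_one: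
  fixes Y :: "'k::finite \<Rightarrow> real^'n^'m"
  assumes Y: "exchange_symmetric Y" and ne: "span (range Y) \<noteq> {0}"
    and dim_le: "dim (span (range Y)) \<le> 3" and no_rank1: "\<forall>Z\<in>span (range Y). rank Z \<noteq> 1"
  shows "dim (span (range Y)) = 3 \<and> (\<exists>W. subspace W \<and> dim W = 2 \<and> (\<forall>X\<in>span (range Y). \<forall>b. X *v b \<in> W))"
proof -
  let ?K = "span (range Y)"
  have le: "dim (evaluation_space ?K a) \<le> dim ?K" for a
    unfolding evaluation_space_def by (rule dim_image_le[OF linear_matrix_vector_mult_left])
  obtain a where max: "\<And>a'. dim (evaluation_space ?K a') \<le> dim (evaluation_space ?K a)"
    using Lattices_Big.ex_has_greatest_nat[of "\<lambda>_. True" _ "\<lambda>a. dim (evaluation_space ?K a)" "dim ?K + 1"] le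
    by (auto simp: less_Suc_eq_le)
  let ?W = "evaluation_space ?K a"
  have cols: "\<forall>X\<in>?K. \<forall>b. X *v b \<in> ?W" using columns_in_maximal_evaluation_space[OF Y max] by blast
  have "dim ?W < dim ?K"
  proof (rule ccontr)
    assume "\<not> dim ?W < dim ?K"
    then have "\<And>X. X \<in> ?K \<Longrightarrow> X *v a = 0 \<Longrightarrow> X = 0"
      using dim_image_less_iff[OF linear_matrix_vector_mult_left subspace_span] unfolding evaluation_space_def by blast
    then show False using rank_one_in_span_if_injective_evaluation[OF Y _ ne] no_rank1 by blast
  qed
  moreover have "\<not> dim ?W \<le> 1"
  proof
    assume "dim ?W \<le> 1"
    obtain X where X: "X \<in> ?K" "X \<noteq> 0" using ne subspace_0[OF subspace_span] by blast
    have "rank X \<le> dim ?W" using cols X(1) unfolding rank_dim_range by (intro dim_subset) auto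
    then have "rank X = 1" using \<open>dim ?W \<le> 1\<close> X(2) rank_eq_0[of X] by linarith
    then show False using no_rank1 X(1) by blast
  qed
  ultimately show ?thesis
    using dim_le cols subspace_evaluation_space[OF subspace_span] by (intro conjI exI[of _ ?W]) auto
qed

lemma matrix_vector_mult_through_row_plane:
  fixes X :: "real^'n^'m"
  assumes f: "f1 \<bullet> f1 = 1" "f2 \<bullet> f2 = 1" "f1 \<bullet> f2 = 0"
    and V: "\<And>u. u \<in> V \<Longrightarrow> u = (f1 \<bullet> u) *\<^sub>R f1 + (f2 \<bullet> u) *\<^sub>R f2"
    and rows: "\<forall>b. transpose X *v b \<in> V"
  shows "X *v y = (f1 \<bullet> y) *\<^sub>R (X *v f1) + (f2 \<bullet> y) *\<^sub>R (X *v f2)"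
proof -
  define z where "z = y - (f1 \<bullet> y) *\<^sub>R f1 - (f2 \<bullet> y) *\<^sub>R f2"
  have z: "f1 \<bullet> z = 0" "f2 \<bullet> z = 0"
    unfolding z_def using f by (simp_all add: inner_diff_right inner_commute[of f2 f1])
  have "(X *v z) $ i = 0" for i
  proof -
    let ?r = "axis i 1 v* X"
    have "?r \<in> V" using rows transpose_matrix_vector by metis
    then have "?r = (f1 \<bullet> ?r) *\<^sub>R f1 + (f2 \<bullet> ?r) *\<^sub>R f2" by (rule V)
    then have "?r \<bullet> z = ((f1 \<bullet> ?r) *\<^sub>R f1 + (f2 \<bullet> ?r) *\<^sub>R f2) \<bullet> z"
      by (rule arg_cong[where f="\<lambda>v. v \<bullet> z"])
    also have "\<dots> = 0" using z by (simp add: inner_add_left)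
    finally have "?r \<bullet> z = 0" .
    then show ?thesis using dot_lmul_matrix[of "axis i 1" X z] by (simp add: inner_axis')
  qed
  then have "X *v z = 0" by (simp add: vec_eq_iff)
  have "X *v y = X *v (((f1 \<bullet> y) *\<^sub>R f1 + (f2 \<bullet> y) *\<^sub>R f2) + z)" unfolding z_def by simp
  also have "\<dots> = (f1 \<bullet> y) *\<^sub>R (X *v f1) + (f2 \<bullet> y) *\<^sub>R (X *v f2)"
    using \<open>X *v z = 0\<close> by (simp add: matrix_vector_right_distrib matrix_vector_mult_scaleR)
  finally show ?thesis .
qed

text \<open>A three-dimensional space of \<open>2\<times>2\<close> matrices (in coordinates \<open>\<alpha> \<beta> \<gamma> \<delta>\<close>) meets
  both the positive and the negative cone of the determinant, hence contains a nonzero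
  singular matrix.\<close>
lemma nonzero_singular_in_three_dim_subspace:
  fixes \<alpha> \<beta> \<gamma> \<delta> :: "'a::euclidean_space \<Rightarrow> real"
  assumes K: "subspace K" "dim K = 3"
    and lin: "linear \<alpha>" "linear \<beta>" "linear \<gamma>" "linear \<delta>"
    and nz: "\<And>X. X \<in> K \<Longrightarrow> \<alpha> X = 0 \<Longrightarrow> \<beta> X = 0 \<Longrightarrow> \<gamma> X = 0 \<Longrightarrow> \<delta> X = 0 \<Longrightarrow> X = 0"
  shows "\<exists>Z\<in>K. Z \<noteq> 0 \<and> \<alpha> Z * \<delta> Z = \<beta> Z * \<gamma> Z"
proof -
  define q where "q = (\<lambda>X. \<alpha> X * \<delta> X - \<beta> X * \<gamma> X)"
  have kernel: "\<exists>X\<in>K. X \<noteq> 0 \<and> L X = 0" if "linear L" for L :: "'a \<Rightarrow> real \<times> real"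
    using dim_image_less_iff[OF that K(1)] dim_subset_UNIV[of "L ` K"] K(2) by simp
  obtain X1 where X1: "X1 \<in> K" "X1 \<noteq> 0" "\<alpha> X1 = \<delta> X1" "\<beta> X1 = - \<gamma> X1"
    using kernel[of "\<lambda>X. (\<alpha> X - \<delta> X, \<beta> X + \<gamma> X)"] lin
    by (auto simp: linear_iff zero_prod_def algebra_simps)
  obtain X2 where X2: "X2 \<in> K" "X2 \<noteq> 0" "\<alpha> X2 = - \<delta> X2" "\<beta> X2 = \<gamma> X2"
    using kernel[of "\<lambda>X. (\<alpha> X + \<delta> X, \<beta> X - \<gamma> X)"] lin
    by (auto simp: linear_iff zero_prod_def algebra_simps)
  have "q X1 = (\<alpha> X1)\<^sup>2 + (\<beta> X1)\<^sup>2" "q X2 = - ((\<alpha> X2)\<^sup>2 + (\<beta> X2)\<^sup>2)"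
    unfolding q_def using X1(3,4) X2(3,4) by (simp_all add: power2_eq_square)
  moreover have "\<alpha> X1 \<noteq> 0 \<or> \<beta> X1 \<noteq> 0" "\<alpha> X2 \<noteq> 0 \<or> \<beta> X2 \<noteq> 0"
    using nz X1 X2 by force+
  then have "(\<alpha> X1)\<^sup>2 + (\<beta> X1)\<^sup>2 > 0" "(\<alpha> X2)\<^sup>2 + (\<beta> X2)\<^sup>2 > 0"
    by (simp_all add: sum_power2_gt_zero_iff)
  ultimately have "q X1 > 0" "q X2 < 0" by simp_all
  moreover have "continuous_on K q"
    unfolding q_def using lin by (intro continuous_intros linear_continuous_on) (simp_all add: linear_conv_bounded_linear)
  moreover have "q (c *\<^sub>R X) = c\<^sup>2 * q X" for c X
    unfolding q_def using lin by (simp add: linear_cmul power2_eq_square algebra_simps)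
  ultimately show ?thesis
    using isotropic_vector_if_indefinite[OF K(1), of q X1 X2] X1(1) X2(1) unfolding q_def by auto
qed

lemma rank_one_if_columns_and_rows_in_planes:
  fixes K :: "(real^'n^'m) set"
  assumes K: "subspace K" "dim K = 3"
    and W: "subspace W" "dim W = 2" "\<forall>X\<in>K. \<forall>b. X *v b \<in> W"
    and V: "subspace V" "dim V = 2" "\<forall>X\<in>K. \<forall>b. transpose X *v b \<in> V"
  shows "\<exists>Z\<in>K. rank Z = 1"
proof -
  obtain e1 e2 where e: "\<And>u. u \<in> W \<Longrightarrow> u = (e1 \<bullet> u) *\<^sub>R e1 + (e2 \<bullet> u) *\<^sub>R e2"
    using orthonormal_basis_of_plane[OF W(1,2)] by metis
  obtain f1 f2 where f: "f1 \<bullet> f1 = 1" "f2 \<bullet> f2 = 1" "f1 \<bullet> f2 = 0"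
    "\<And>u. u \<in> V \<Longrightarrow> u = (f1 \<bullet> u) *\<^sub>R f1 + (f2 \<bullet> u) *\<^sub>R f2"
    using orthonormal_basis_of_plane[OF V(1,2)] by metis
  have cols: "X *v y = (f1 \<bullet> y) *\<^sub>R (X *v f1) + (f2 \<bullet> y) *\<^sub>R (X *v f2)" if "X \<in> K" for X y
    using matrix_vector_mult_through_row_plane[OF f] V(3) that by blast
  have coords: "X *v f = (e1 \<bullet> (X *v f)) *\<^sub>R e1 + (e2 \<bullet> (X *v f)) *\<^sub>R e2" if "X \<in> K" for X f
    using e W(3) that by blast
  have "\<exists>Z\<in>K. Z \<noteq> 0 \<and> (e1 \<bullet> (Z *v f1)) * (e2 \<bullet> (Z *v f2)) = (e1 \<bullet> (Z *v f2)) * (e2 \<bullet> (Z *v f1))"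
  proof (rule nonzero_singular_in_three_dim_subspace[OF K])
    fix X assume X: "X \<in> K" "e1 \<bullet> (X *v f1) = 0" "e1 \<bullet> (X *v f2) = 0" "e2 \<bullet> (X *v f1) = 0"
      "e2 \<bullet> (X *v f2) = 0"
    have "X *v f = 0" if "e1 \<bullet> (X *v f) = 0" "e2 \<bullet> (X *v f) = 0" for f
      by (subst coords[OF X(1)]) (simp add: that)
    then have "X *v f1 = 0" "X *v f2 = 0" using X(2-5) by blast+
    then have "X *v y = 0" for y using cols[OF X(1), of y] by simp
    then show "X = 0" by (rule matrix_eq_0_if_columns_eq_0)
  qed (intro linear_compose[OF linear_matrix_vector_mult_left bounded_linear.linear[OF bounded_linear_inner_right], unfolded o_def])+
  then obtain Z where Z: "Z \<in> K" "Z \<noteq> 0"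
    "(e1 \<bullet> (Z *v f1)) * (e2 \<bullet> (Z *v f2)) = (e1 \<bullet> (Z *v f2)) * (e2 \<bullet> (Z *v f1))" by blast
  then obtain w where "Z *v f1 \<in> span {w}" "Z *v f2 \<in> span {w}"
    using common_line_if_det_eq_0[OF Z(3), of e1 e2]
    unfolding coords[OF Z(1), of f1, symmetric] coords[OF Z(1), of f2, symmetric] by blast
  then have "Z *v axis l 1 \<in> span {w}" for l
    by (subst cols[OF Z(1)]) (auto intro: span_add span_scale)
  then show ?thesis using Z(1,2) rank_eq_1_if_columns_in_span_singleton by blast
qed

lemma family_form_transpose: "family_form (\<lambda>t. transpose (Y t)) x a = family_form Y a x"
  by (simp add: family_form_def inner_commute[of x] dot_lmul_matrix)

lemma exchange_symmetric_transpose: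
  "exchange_symmetric Y \<Longrightarrow> exchange_symmetric (\<lambda>t. transpose (Y t))"
  unfolding exchange_symmetric_def family_form_transpose by (metis inner_commute)

lemma linear_transpose: "linear (transpose :: real^'n^'m \<Rightarrow> real^'m^'n)"
  by (intro linearI) (simp_all add: transpose_def vec_eq_iff)

lemma rank_one_if_minor_sums_vanish:
  fixes Y :: "'k::finite \<Rightarrow> real^('n::{finite,linorder})^('m::{finite,linorder})"
  assumes Y: "minor_sums_vanish Y" "\<And>t. Y t \<in> K" "\<exists>t. Y t \<noteq> 0"
    and K: "subspace K" "dim K \<le> 3"
  shows "\<exists>Z\<in>K. rank Z = 1"
proof (rule ccontr)
  assume no_rank1: "\<not> (\<exists>Z\<in>K. rank Z = 1)"
  let ?K = "span (range Y)" and ?Y' = "\<lambda>t. transpose (Y t)"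
  have sub: "?K \<subseteq> K" using Y(2) K(1) by (intro span_minimal) auto
  then have K_le: "dim ?K \<le> 3" using dim_subset K(2) by (metis order_trans)
  have K_no_rank1: "\<forall>Z\<in>?K. rank Z \<noteq> 1" using sub no_rank1 by blast
  have K_ne: "?K \<noteq> {0}" using Y(3) span_base[of _ "range Y"] by blast
  have sym: "exchange_symmetric Y" by (rule exchange_symmetric_if_minor_sums_vanish[OF Y(1)])
  obtain W where W: "dim ?K = 3" "subspace W" "dim W = 2" "\<forall>X\<in>?K. \<forall>b. X *v b \<in> W"
    using column_plane_if_no_rank_one[OF sym K_ne K_le K_no_rank1] by blast
  have K': "span (range ?Y') = transpose ` ?K"
    using linear_span_image[OF linear_transpose, of "range Y"] by (simp add: image_image)
  have "X = 0" if "transpose X = 0" for X :: "real^('n::{finite,linorder})^('m::{finite,linorder})"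
    using that by (simp add: vec_eq_iff transpose_def)
  then have "span (range ?Y') \<noteq> {0}"
    using K_ne subspace_0[OF subspace_span] unfolding K' by blast
  moreover have "\<forall>Z\<in>span (range ?Y'). rank Z \<noteq> 1"
    using K_no_rank1 unfolding K' by (auto simp: rank_transpose)
  moreover have "dim (span (range ?Y')) = dim ?K"
    unfolding K' by (rule dim_image_eq[OF linear_transpose]) (simp add: inj_on_def)
  ultimately obtain V where V: "subspace V" "dim V = 2" "\<forall>X\<in>?K. \<forall>b. transpose X *v b \<in> V"
    using column_plane_if_no_rank_one[OF exchange_symmetric_transpose[OF sym]] K_le unfolding K' by auto
  show False
    using rank_one_if_columns_and_rows_in_planes[OF subspace_span W V] K_no_rank1 by blast
qed

section \<open>Convex separation\<close>

lemma convex_combination_indexed_by_option: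
  fixes S :: "(real^'i) set"
  assumes "x \<in> convex hull S"
  obtains u :: "'i option \<Rightarrow> real" and p
  where "\<And>t. 0 \<le> u t" "\<And>t. p t \<in> S" "(\<Sum>t\<in>UNIV. u t) = 1" "(\<Sum>t\<in>UNIV. u t *\<^sub>R p t) = x"
proof -
  obtain T w where T: "finite T" "T \<subseteq> S" "card T \<le> CARD('i) + 1"
    and w: "\<forall>y\<in>T. 0 \<le> w y" "sum w T = 1" "(\<Sum>y\<in>T. w y *\<^sub>R y) = x"
    using assms unfolding convex_hull_caratheodory by auto
  obtain s where s: "s \<in> S" using assms by (cases "S = {}") auto
  have "card T \<le> card (UNIV :: 'i option set)"
    using T(3) by (simp add: UNIV_option_conv card_image)
  then obtain \<iota> :: "real^'i \<Rightarrow> 'i option" where \<iota>: "inj_on \<iota> T"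
    using card_le_inj[OF T(1) finite] by blast
  define p where "p t = (if t \<in> \<iota> ` T then the_inv_into T \<iota> t else s)" for t
  define u where "u t = (if t \<in> \<iota> ` T then w (p t) else 0)" for t
  have p\<iota>: "p (\<iota> y) = y" if "y \<in> T" for y using that \<iota> by (simp add: p_def the_inv_into_f_f)
  have sum_UNIV: "(\<Sum>t\<in>UNIV. f t) = (\<Sum>y\<in>T. f (\<iota> y))" if "\<And>t. t \<notin> \<iota> ` T \<Longrightarrow> f t = 0" for f :: "_ \<Rightarrow> 'b::comm_monoid_add"
  proof -
    have "(\<Sum>t\<in>UNIV. f t) = (\<Sum>t\<in>\<iota> ` T. f t)" by (rule sum.mono_neutral_right) (auto simp: that)
    then show ?thesis by (simp add: sum.reindex[OF \<iota>])
  qed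
  have "(\<Sum>t\<in>UNIV. u t) = sum w T" "(\<Sum>t\<in>UNIV. u t *\<^sub>R p t) = (\<Sum>y\<in>T. w y *\<^sub>R y)"
    by (subst sum_UNIV; auto simp: u_def p\<iota>)+
  moreover have "0 \<le> u t" "p t \<in> S" for t
    using w(1) T(2) s p\<iota> by (auto simp: u_def p_def the_inv_into_into[OF \<iota>])
  ultimately show ?thesis using that w(2,3) by metis
qed

definition minor_vector :: "real^('n::{finite,linorder})^('m::{finite,linorder}) \<Rightarrow> real^('m \<times> 'm \<times> 'n \<times> 'n)" where
  "minor_vector X = (\<chi> idx. if idx \<in> minor_indices then minor2 idx X else 0)"

lemma inner_minor_vector: "c \<bullet> minor_vector X = (\<Sum>idx\<in>minor_indices. c $ idx * minor2 idx X)"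
  by (simp add: minor_vector_def inner_vec_def if_distrib sum.inter_restrict[symmetric] cong: if_cong)

lemma minor_vector_zero [simp]: "minor_vector 0 = 0"
  by (simp add: minor_vector_def vec_eq_iff)

lemma minor_vector_scaleR: "minor_vector (c *\<^sub>R X) = c\<^sup>2 *\<^sub>R minor_vector X"
  by (simp add: minor_vector_def vec_eq_iff minor2_scaleR)

lemma continuous_on_minor_vector:
  fixes S :: "(real^('n::{finite,linorder})^('m::{finite,linorder})) set"
  shows "continuous_on S minor_vector"
  unfolding minor_vector_def
proof (intro continuous_on_vec_lambda)
  fix idx :: "'m \<times> 'm \<times> 'n \<times> 'n"
  show "continuous_on S (\<lambda>X. if idx \<in> minor_indices then minor2 idx X else 0)"
    by (cases "idx \<in> minor_indices"; cases idx) (simp_all add: minor2_def continuous_intros)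
qed

lemma vanishing_minor_family_if_zero_in_hull:
  fixes K :: "(real^('n::{finite,linorder})^('m::{finite,linorder})) set"
  assumes hull: "0 \<in> convex hull (minor_vector ` (K \<inter> sphere 0 1))" and K: "subspace K"
  obtains Y :: "('m \<times> 'm \<times> 'n \<times> 'n) option \<Rightarrow> real^('n::{finite,linorder})^('m::{finite,linorder})"
  where "minor_sums_vanish Y" "\<And>t. Y t \<in> K" "\<exists>t. Y t \<noteq> 0"
proof -
  obtain u :: "('m \<times> 'm \<times> 'n \<times> 'n) option \<Rightarrow> real" and p where u_nonneg: "\<And>t. 0 \<le> u t" and p: "\<And>t. p t \<in> minor_vector ` (K \<inter> sphere 0 1)"
    and u: "(\<Sum>t\<in>UNIV. u t) = 1" "(\<Sum>t\<in>UNIV. u t *\<^sub>R p t) = 0"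
    using convex_combination_indexed_by_option[OF hull] by blast
  have "\<forall>t. \<exists>X. X \<in> K \<inter> sphere 0 1 \<and> p t = minor_vector X" using p by blast
  then obtain X where X: "\<And>t. X t \<in> K \<inter> sphere 0 1" "\<And>t. p t = minor_vector (X t)" by metis
  \<comment> \<open>the weights \<open>u\<close> enter the minors quadratically\<close>
  define Y where "Y t = sqrt (u t) *\<^sub>R X t" for t
  have "(\<Sum>t\<in>UNIV. minor2 idx (Y t)) = (\<Sum>t\<in>UNIV. u t *\<^sub>R p t) $ idx" if "idx \<in> minor_indices" for idx
    using that u_nonneg by (simp add: Y_def X(2) minor2_scaleR minor_vector_def)
  then have "minor_sums_vanish Y" unfolding minor_sums_vanish_def u(2) by simp
  moreover have "Y t \<in> K" for t using X(1) K by (simp add: Y_def subspace_scale)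
  moreover obtain t where "u t \<noteq> 0" using u(1) by force
  then have "Y t \<noteq> 0" using X(1)[of t] u_nonneg[of t] by (auto simp: Y_def)
  ultimately show ?thesis using that by blast
qed

lemma positive_minor_functional_if_no_rank_one:
  fixes K :: "(real^('n::{finite,linorder})^('m::{finite,linorder})) set"
  assumes K: "subspace K" "dim K \<le> 3" and no_rank1: "\<forall>Z\<in>K. rank Z \<noteq> 1"
  obtains c where "\<And>X. X \<in> K \<Longrightarrow> X \<noteq> 0 \<Longrightarrow> c \<bullet> minor_vector X > 0"
proof -
  let ?H = "convex hull (minor_vector ` (K \<inter> sphere 0 1))"
  have "compact (K \<inter> sphere 0 1)" using K(1) by (simp add: closed_subspace closed_Int_compact Int_commute)
  then have "closed ?H"
    by (intro compact_imp_closed compact_convex_hull compact_continuous_image continuous_on_minor_vector)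
  moreover have "0 \<notin> ?H"
  proof
    assume "0 \<in> ?H"
    then obtain Y :: "('m \<times> 'm \<times> 'n \<times> 'n) option \<Rightarrow> real^('n::{finite,linorder})^('m::{finite,linorder})"
      where "minor_sums_vanish Y" "\<And>t. Y t \<in> K" "\<exists>t. Y t \<noteq> 0"
      using vanishing_minor_family_if_zero_in_hull K(1) by blast
    then show False using rank_one_if_minor_sums_vanish K no_rank1 by blast
  qed
  ultimately obtain c b where b: "c \<bullet> 0 < b" and sep: "\<And>y. y \<in> ?H \<Longrightarrow> c \<bullet> y > b"
    using separating_hyperplane_closed_point[OF convex_convex_hull] by blast
  have pos: "c \<bullet> minor_vector X > 0" if "X \<in> K \<inter> sphere 0 1" for X
    using sep[OF hull_inc[OF imageI[OF that]]] b by simp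
  have "c \<bullet> minor_vector X > 0" if "X \<in> K" "X \<noteq> 0" for X
  proof -
    have "X /\<^sub>R norm X \<in> K \<inter> sphere 0 1" using that K(1) by (simp add: subspace_scale)
    moreover have "minor_vector X = (norm X)\<^sup>2 *\<^sub>R minor_vector (X /\<^sub>R norm X)"
      using that(2) by (simp add: minor_vector_scaleR flip: power_mult_distrib)
    ultimately show ?thesis using pos that(2) by simp
  qed
  then show ?thesis using that by blast
qed

theorem theorem7:
  fixes K :: "(real^('n::{finite,linorder})^('m::{finite,linorder})) set"
    and d :: nat
  assumes "d \<in> {1, 2, 3}"
    and "subspace K"
    and "dim K = d"
    and "\<not> has_rank1_connections K"
  shows "\<exists>\<beta> :: 'm \<times> 'm \<times> 'n \<times> 'n \<Rightarrow> real.
           (\<exists>idx\<in>minor_indices. \<beta> idx \<noteq> 0)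
         \<and> (\<forall>X\<in>K. (\<Sum>idx\<in>minor_indices. \<beta> idx * minor2 idx X) \<ge> 0)
         \<and> (\<exists>X\<in>K. (\<Sum>idx\<in>minor_indices. \<beta> idx * minor2 idx X) \<noteq> 0)"
proof -
  have K: "subspace K" "dim K \<le> 3" and no_rank1: "\<forall>Z\<in>K. rank Z \<noteq> 1"
    using assms has_rank1_connections_subspace_iff by auto
  obtain c where c: "\<And>X. X \<in> K \<Longrightarrow> X \<noteq> 0 \<Longrightarrow> c \<bullet> minor_vector X > 0"
    using positive_minor_functional_if_no_rank_one[OF K no_rank1] by blast
  obtain X0 where X0: "X0 \<in> K" "X0 \<noteq> 0"
    using assms(1,3) dim_eq_0[of K] subspace_0[OF K(1)] by fastforce
  define \<beta> where "\<beta> idx = c $ idx" for idx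
  have form: "(\<Sum>idx\<in>minor_indices. \<beta> idx * minor2 idx X) = c \<bullet> minor_vector X" for X
    by (simp add: \<beta>_def inner_minor_vector)
  show ?thesis
  proof (intro exI[of _ \<beta>] conjI)
    show "\<forall>X\<in>K. (\<Sum>idx\<in>minor_indices. \<beta> idx * minor2 idx X) \<ge> 0"
      unfolding form using c by (metis less_imp_le inner_zero_right minor_vector_zero order_refl)
    have X0_form: "(\<Sum>idx\<in>minor_indices. \<beta> idx * minor2 idx X0) \<noteq> 0"
      unfolding form using c[OF X0] by simp
    then show "\<exists>X\<in>K. (\<Sum>idx\<in>minor_indices. \<beta> idx * minor2 idx X) \<noteq> 0" using X0(1) by blast
    show "\<exists>idx\<in>minor_indices. \<beta> idx \<noteq> 0"
      using X0_form by (rule contrapos_np) simp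
  qed
qed

end
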